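(* Let $1\le p\le\infty$ and let $X$ be an Asymptotic $\ell_p$ space. Then $X$ admits a uniformly unique $l$-joint spreading model with respect to $\mathscr{F}_0(X)$, and every $l$-joint spreading model generated by sequences from $\mathscr{F}_0(X)$ is equivalent to the unit vector basis of $\ell_p$ (of $c_0$ if $p=\infty$).
   Context: $\mathscr{F}_0(X)$ is the set of normalized weakly null Schauder basic sequences in $X$. For $n\in\mathbb{N}$ and $C\ge1$, the game $G(p,n,C)$ has $n$ rounds; in each round player (S) chooses a closed finite-codimensional subspace $Y$ of $X$ and player (V) chooses a norm-one $y\in Y$; (S) wins if the resulting $(y_i)_{i=1}^n$ is $C$-equivalent to the unit vector basis of $\ell_p^n$ ($c_0^n$ if $p=\infty$). $X$ is Asymptotic $\ell_p$ (or $C$-Asymptotic $\ell_p$) if there is $C$ such that for every $n$, (S) has a winning strategy in $G(p,n,C)$. For infinite $M\subset\mathbb{N}$ with elements $M(1)<M(2)<\cdots$, a strict plegma family in $[M]^k$ is a sequence $(s_i)_{i=1}^l$ of $k$-element subsets $s_i=\{s_i(1)<\cdots<s_i(k)\}$ of $M$ with $s_{i_1}(j_1)<s_{i_2}(j_2)$ whenever $j_1<j_2$ and $s_{i_1}(j)<s_{i_2}(j)$ whenever $i_1<i_2$. An $l$-tuple $((x^i_n)_n)_{i=1}^l$ generates $(e^i_n)_{i\le l,n}$ (in a Banach space $(E,\|\cdot\|_* )$) as an $l$-joint spreading model if for some infinite $M$ there is a null sequence $(\delta_k)$ with $\big|\|\sum_{j\le k}\sum_{i\le l}a_{ij}x^i_{s_i(j)}\|-\|\sum_{j\le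 k}\sum_{i\le l}a_{ij}e^i_j\|_*\big|<\delta_k$ for all $k$, all $(a_{ij})\subset[-1,1]$ and all strict plegma families $(s_i)$ in $[M]^k$ with $M(k)\le s_1(1)$. Two families indexed by the same set are $K$-equivalent if there are $c,C>0$, $C/c\le K$, with $c\|\sum a_{ij}e^i_j\|\le\|\sum a_{ij}f^i_j\|\le C\|\sum a_{ij}e^i_j\|$. $X$ admits a uniformly unique $l$-joint spreading model with respect to $\mathscr{F}$ if there is $K>0$ such that for every $l$, any two $l$-joint spreading models generated by $l$-tuples of sequences in $\mathscr{F}$ are $K$-equivalent. *)

theory Defs
  imports "HOL-Analysis.Analysis" "HOL-Library.Infinite_Set"
begin

definition weakly_null :: "(nat \<Rightarrow> 'a::real_normed_vector) \<Rightarrow> bool" where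
  "weakly_null x \<longleftrightarrow>
     (\<forall>f :: 'a \<Rightarrow> real. bounded_linear f \<longrightarrow> (\<lambda>n. f (x n)) \<longlonglongrightarrow> 0)"

definition schauder_basic :: "(nat \<Rightarrow> 'a::real_normed_vector) \<Rightarrow> bool" where
  "schauder_basic x \<longleftrightarrow>
     (\<forall>y \<in> closure (span (range x)). \<exists>!a :: nat \<Rightarrow> real. (\<lambda>n. a n *\<^sub>R x n) sums y)"

definition F0 :: "(nat \<Rightarrow> 'a::real_normed_vector) \<Rightarrow> bool" where
  "F0 x \<longleftrightarrow> (\<forall>n. norm (x n) = 1) \<and> weakly_null x \<and> schauder_basic x"

definition fin_codim_subspace :: "'a::real_normed_vector set \<Rightarrow> bool" where
  "fin_codim_subspace Y \<longleftrightarrow> subspace Y \<and> closed Y \<and>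
     (\<exists>F. finite F \<and> span (Y \<union> F) = UNIV)"

definition lp_norm :: "ereal \<Rightarrow> 'i set \<Rightarrow> ('i \<Rightarrow> real) \<Rightarrow> real" where
  "lp_norm p I a =
     (if p = \<infinity> then (if I = {} then 0 else Max ((\<lambda>i. \<bar>a i\<bar>) ` I))
      else (\<Sum>i\<in>I. \<bar>a i\<bar> powr real_of_ereal p) powr (1 / real_of_ereal p))"

definition equiv_lpn :: "ereal \<Rightarrow> real \<Rightarrow> nat \<Rightarrow> (nat \<Rightarrow> 'a::real_normed_vector) \<Rightarrow> bool" where
  "equiv_lpn p C n y \<longleftrightarrow>
     (\<exists>c D. c > 0 \<and> D > 0 \<and> D / c \<le> C \<and>
        (\<forall>a :: nat \<Rightarrow> real.
           c * lp_norm p {..<n} a \<le> norm (\<Sum>i<n. a i *\<^sub>R y i) \<and>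
           norm (\<Sum>i<n. a i *\<^sub>R y i) \<le> D * lp_norm p {..<n} a))"

text \<open>A strategy of player (S) maps the history of (V)'s previous moves
  (y_1,...,y_{i-1}) to a closed finite-codimensional subspace.\<close>
definition winning_strategy ::
    "ereal \<Rightarrow> nat \<Rightarrow> real \<Rightarrow> ('a::banach list \<Rightarrow> 'a set) \<Rightarrow> bool" where
  "winning_strategy p n C \<sigma> \<longleftrightarrow>
     (\<forall>h. fin_codim_subspace (\<sigma> h)) \<and>
     (\<forall>y :: nat \<Rightarrow> 'a.
        (\<forall>i<n. y i \<in> \<sigma> (map y [0..<i]) \<and> norm (y i) = 1) \<longrightarrow> equiv_lpn p C n y)"

definition asymptotic_lp :: "'a::banach itself \<Rightarrow> ereal \<Rightarrow> bool" where
  "asymptotic_lp X p \<longleftrightarrow>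
     (\<exists>C\<ge>1. \<forall>n. \<exists>\<sigma> :: 'a list \<Rightarrow> 'a set. winning_strategy p n C \<sigma>)"

text \<open>Strict plegma family (s_i)_{i<l} in [M]^k, 0-based: s i j is s_{i+1}(j+1).\<close>
definition strict_plegma :: "nat set \<Rightarrow> nat \<Rightarrow> nat \<Rightarrow> (nat \<Rightarrow> nat \<Rightarrow> nat) \<Rightarrow> bool" where
  "strict_plegma M k l s \<longleftrightarrow>
     (\<forall>i<l. \<forall>j<k. s i j \<in> M) \<and>
     (\<forall>i1<l. \<forall>i2<l. \<forall>j1<k. \<forall>j2<k. j1 < j2 \<longrightarrow> s i1 j1 < s i2 j2) \<and>
     (\<forall>i1<l. \<forall>i2<l. \<forall>j<k. i1 < i2 \<longrightarrow> s i1 j < s i2 j)"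

definition fsupp :: "nat \<Rightarrow> (nat \<Rightarrow> nat \<Rightarrow> real) \<Rightarrow> bool" where
  "fsupp l a \<longleftrightarrow> finite {(i, j). a i j \<noteq> 0} \<and> (\<forall>i j. a i j \<noteq> 0 \<longrightarrow> i < l)"

text \<open>An l-joint spreading model (e^i_j) in a Banach space (E, ||.||_*) is represented
  by the function  N a = || \<Sum> a_{ij} e^i_j ||_*  on finitely supported arrays.
  Such functions are exactly the seminorms on the space of finitely supported arrays
  (every seminorm arises from vectors e^i_j in the completion of the quotient space).\<close>
definition array_seminorm :: "nat \<Rightarrow> ((nat \<Rightarrow> nat \<Rightarrow> real) \<Rightarrow> real) \<Rightarrow> bool" where
  "array_seminorm l N \<longleftrightarrow>
     (\<forall>a b. fsupp l a \<longrightarrow> fsupp l b \<longrightarrow> N (\<lambda>i j. a i j + b i j) \<le> N a + N b) \<and>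
     (\<forall>c a. fsupp l a \<longrightarrow> N (\<lambda>i j. c * a i j) = \<bar>c\<bar> * N a)"

text \<open>((x^i_n)_n)_{i<l} generates N as an l-joint spreading model. Here M(k) (1-based)
  is enumerate M (k - 1).\<close>
definition generates_jsm ::
    "nat \<Rightarrow> (nat \<Rightarrow> nat \<Rightarrow> 'a::real_normed_vector) \<Rightarrow> ((nat \<Rightarrow> nat \<Rightarrow> real) \<Rightarrow> real) \<Rightarrow> bool" where
  "generates_jsm l x N \<longleftrightarrow> array_seminorm l N \<and>
     (\<exists>M \<delta>. infinite M \<and> \<delta> \<longlonglongrightarrow> 0 \<and>
        (\<forall>k\<ge>1. \<forall>a s. (\<forall>i j. \<bar>a i j\<bar> \<le> 1) \<longrightarrow> strict_plegma M k l s \<longrightarrow>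
           enumerate M (k - 1) \<le> s 0 0 \<longrightarrow>
           \<bar>norm (\<Sum>j<k. \<Sum>i<l. a i j *\<^sub>R x i (s i j))
              - N (\<lambda>i j. if i < l \<and> j < k then a i j else 0)\<bar> < \<delta> k))"

definition jsm_equiv :: "real \<Rightarrow> nat \<Rightarrow> ((nat \<Rightarrow> nat \<Rightarrow> real) \<Rightarrow> real)
    \<Rightarrow> ((nat \<Rightarrow> nat \<Rightarrow> real) \<Rightarrow> real) \<Rightarrow> bool" where
  "jsm_equiv K l N1 N2 \<longleftrightarrow>
     (\<exists>c D. c > 0 \<and> D > 0 \<and> D / c \<le> K \<and>
        (\<forall>a. fsupp l a \<longrightarrow> c * N1 a \<le> N2 a \<and> N2 a \<le> D * N1 a))"

definition jsm_equiv_lp :: "ereal \<Rightarrow> nat \<Rightarrow> ((nat \<Rightarrow> nat \<Rightarrow> real) \<Rightarrow> real) \<Rightarrow> bool" where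
  "jsm_equiv_lp p l N \<longleftrightarrow>
     (\<exists>c D. c > 0 \<and> D > 0 \<and>
        (\<forall>a. fsupp l a \<longrightarrow>
           c * lp_norm p {(i, j). a i j \<noteq> 0} (\<lambda>(i, j). a i j) \<le> N a \<and>
           N a \<le> D * lp_norm p {(i, j). a i j \<noteq> 0} (\<lambda>(i, j). a i j)))"

definition unif_unique_jsm_F0 :: "'a::banach itself \<Rightarrow> bool" where
  "unif_unique_jsm_F0 X \<longleftrightarrow>
     (\<exists>K>0. \<forall>l\<ge>1. \<forall>(x :: nat \<Rightarrow> nat \<Rightarrow> 'a) (y :: nat \<Rightarrow> nat \<Rightarrow> 'a) N1 N2.
        (\<forall>i<l. F0 (x i)) \<longrightarrow> (\<forall>i<l. F0 (y i)) \<longrightarrow>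
        generates_jsm l x N1 \<longrightarrow> generates_jsm l y N2 \<longrightarrow> jsm_equiv K l N1 N2)"

end

theory Submission
  imports Defs
begin

(* Let N be a joint spreading model generated by normalized weakly null sequences
   x^1, ..., x^l in an Asymptotic l_p space with constant C, and let a be a coefficient array
   supported in the first k columns. A weakly null sequence eventually comes arbitrarily close
   to every closed finite-codimensional subspace, so against a winning strategy of (S) in
   G(p, k l, C) player (V) can answer with normalized vectors approximating the terms
   x^i_{s_i(j)} along a strict plegma family (s_i) as far out as desired. The sum of the
   a_ij x^i_{s_i(j)} is then close both to a vector whose norm is within a factor C of the
   l_p norm of a, and, for large k, to N(a). Hence ||a||_p / C <= N(a) <= C ||a||_p for every
   such N, and any two of them are C^4-equivalent. *)

section \<open>l_p norms of finitely many coefficients\<close>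

lemma lp_norm_infinity:
  assumes "finite I"
  shows "lp_norm \<infinity> I f = Max (insert 0 ((\<lambda>i. \<bar>f i\<bar>) ` I))"
proof (cases "I = {}")
  case False
  then obtain i where "i \<in> I" by blast
  then have "\<bar>f i\<bar> \<le> Max ((\<lambda>i. \<bar>f i\<bar>) ` I)"
    using assms by (intro Max_ge) auto
  then have "0 \<le> Max ((\<lambda>i. \<bar>f i\<bar>) ` I)" by linarith
  then show ?thesis using False assms by (simp add: lp_norm_def)
qed (simp add: lp_norm_def)

lemma lp_norm_nonneg:
  assumes "finite I"
  shows "0 \<le> lp_norm p I f"
proof (cases "p = \<infinity>")
  case True
  then show ?thesis using assms by (simp add: lp_norm_infinity)
qed (simp add: lp_norm_def)

lemma lp_norm_scale:
  assumes "0 \<le> c" "finite I" "0 < p"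
  shows "lp_norm p I (\<lambda>i. c * f i) = c * lp_norm p I f"
proof (cases "p = \<infinity>")
  case True
  have "insert 0 ((\<lambda>i. \<bar>c * f i\<bar>) ` I) = (*) c ` insert 0 ((\<lambda>i. \<bar>f i\<bar>) ` I)"
    using assms(1) by (auto simp: abs_mult)
  moreover have "mono ((*) c)" using assms(1) by (intro monoI mult_left_mono)
  ultimately show ?thesis
    using True assms(2) by (simp add: lp_norm_infinity mono_Max_commute)
next
  case False
  define q where "q = real_of_ereal p"
  have q: "q > 0" using assms(3) False unfolding q_def by (cases p) auto
  have "lp_norm p I (\<lambda>i. c * f i) = (\<Sum>i\<in>I. \<bar>c * f i\<bar> powr q) powr (1/q)"
    using False by (simp add: lp_norm_def q_def)
  also have "\<dots> = (c powr q * (\<Sum>i\<in>I. \<bar>f i\<bar> powr q)) powr (1/q)"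
    using assms(1) by (simp add: abs_mult powr_mult sum_distrib_left)
  also have "\<dots> = (c powr q) powr (1/q) * (\<Sum>i\<in>I. \<bar>f i\<bar> powr q) powr (1/q)"
    by (rule powr_mult)
  also have "(c powr q) powr (1/q) = c"
    using assms(1) q by (simp add: powr_powr)
  also have "(\<Sum>i\<in>I. \<bar>f i\<bar> powr q) powr (1/q) = lp_norm p I f"
    using False by (simp add: lp_norm_def q_def)
  finally show ?thesis .
qed

lemma lp_norm_reindex:
  assumes "bij_betw \<phi> I J"
  shows "lp_norm p I (f \<circ> \<phi>) = lp_norm p J f"
proof -
  have "(\<lambda>i. \<bar>(f \<circ> \<phi>) i\<bar>) ` I = (\<lambda>j. \<bar>f j\<bar>) ` J"
    using bij_betw_imp_surj_on[OF assms] by (auto simp: image_comp[symmetric])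
  moreover have "(\<Sum>i\<in>I. \<bar>(f \<circ> \<phi>) i\<bar> powr real_of_ereal p) = (\<Sum>j\<in>J. \<bar>f j\<bar> powr real_of_ereal p)"
    using sum.reindex_bij_betw[OF assms] by simp
  moreover have "I = {} \<longleftrightarrow> J = {}" using bij_betw_imp_surj_on[OF assms] by auto
  ultimately show ?thesis by (simp add: lp_norm_def)
qed

lemma lp_norm_mono_neutral:
  assumes "finite J" "I \<subseteq> J" "\<forall>j\<in>J - I. f j = 0"
  shows "lp_norm p J f = lp_norm p I f"
proof (cases "p = \<infinity>")
  case True
  have "insert 0 ((\<lambda>j. \<bar>f j\<bar>) ` J) = insert 0 ((\<lambda>i. \<bar>f i\<bar>) ` I)"
    using assms(2,3) by auto
  then show ?thesis using True assms(1,2) finite_subset by (metis lp_norm_infinity)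
next
  case False
  have "(\<Sum>j\<in>J. \<bar>f j\<bar> powr real_of_ereal p) = (\<Sum>i\<in>I. \<bar>f i\<bar> powr real_of_ereal p)"
    using assms by (intro sum.mono_neutral_right) auto
  then show ?thesis using False by (simp add: lp_norm_def)
qed

lemma lp_norm_unit_vector:
  assumes "finite I" "i\<^sub>0 \<in> I"
  shows "lp_norm p I (\<lambda>i. if i = i\<^sub>0 then 1 else 0) = 1"
proof -
  have "lp_norm p I (\<lambda>i. if i = i\<^sub>0 then 1 else 0) = lp_norm p {i\<^sub>0} (\<lambda>i. if i = i\<^sub>0 then 1 else 0)"
    using assms by (intro lp_norm_mono_neutral) auto
  also have "\<dots> = 1" by (simp add: lp_norm_def)
  finally show ?thesis .
qed

section \<open>Interlaced indexing of arrays\<close>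

definition coeff_lp_norm :: "ereal \<Rightarrow> (nat \<Rightarrow> nat \<Rightarrow> real) \<Rightarrow> real" where
  "coeff_lp_norm p a = lp_norm p {(i, j). a i j \<noteq> 0} (\<lambda>(i, j). a i j)"

lemma interlace_index_less:
  fixes i j k l :: nat
  assumes "i < l" "j < k"
  shows "j * l + i < k * l"
proof -
  have "j * l + i < Suc j * l" using assms(1) by simp
  also have "\<dots> \<le> k * l" using assms(2) by (intro mult_right_mono) simp_all
  finally show ?thesis .
qed

lemma bij_betw_mod_div:
  fixes k l :: nat
  shows "bij_betw (\<lambda>r. (r mod l, r div l)) {..<k * l} ({..<l} \<times> {..<k})"
proof (rule bij_betw_imageI)
  show "inj_on (\<lambda>r. (r mod l, r div l)) {..<k * l}"
  proof (rule inj_onI)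
    fix r r' assume "(r mod l, r div l) = (r' mod l, r' div l)"
    then have "r div l * l + r mod l = r' div l * l + r' mod l" by simp
    then show "r = r'" by simp
  qed
  show "(\<lambda>r. (r mod l, r div l)) ` {..<k * l} = {..<l} \<times> {..<k}"
  proof
    show "(\<lambda>r. (r mod l, r div l)) ` {..<k * l} \<subseteq> {..<l} \<times> {..<k}"
    proof (rule image_subsetI)
      fix r assume "r \<in> {..<k * l}"
      then have r: "r < k * l" by simp
      then have "0 < l" by (cases l) simp_all
      with r show "(r mod l, r div l) \<in> {..<l} \<times> {..<k}"
        by (simp add: less_mult_imp_div_less)
    qed
  next
    show "{..<l} \<times> {..<k} \<subseteq> (\<lambda>r. (r mod l, r div l)) ` {..<k * l}"
    proof clarify
      fix i j assume ij: "i < l" "j < k"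
      have "j * l + i < k * l" using ij by (rule interlace_index_less)
      moreover have "(i, j) = ((j * l + i) mod l, (j * l + i) div l)" using ij by simp
      ultimately show "(i, j) \<in> (\<lambda>r. (r mod l, r div l)) ` {..<k * l}" by blast
    qed
  qed
qed

lemma sum_interlace:
  fixes f :: "nat \<Rightarrow> nat \<Rightarrow> 'b::comm_monoid_add"
  shows "(\<Sum>j<k. \<Sum>i<l. f i j) = (\<Sum>r<k * l. f (r mod l) (r div l))"
proof -
  have "(\<Sum>r<k * l. f (r mod l) (r div l)) = (\<Sum>(i, j)\<in>{..<l} \<times> {..<k}. f i j)"
    using sum.reindex_bij_betw[OF bij_betw_mod_div, of "\<lambda>(i, j). f i j"] by simp
  also have "\<dots> = (\<Sum>i<l. \<Sum>j<k. f i j)" by (rule sum.cartesian_product[symmetric])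
  also have "\<dots> = (\<Sum>j<k. \<Sum>i<l. f i j)" by (rule sum.swap)
  finally show ?thesis by simp
qed

lemma lp_norm_interlace:
  fixes a :: "nat \<Rightarrow> nat \<Rightarrow> real"
  assumes "\<And>i j. a i j \<noteq> 0 \<Longrightarrow> i < l \<and> j < k"
  shows "lp_norm p {..<k * l} (\<lambda>r. a (r mod l) (r div l)) = coeff_lp_norm p a"
proof -
  have "lp_norm p {..<k * l} (\<lambda>r. a (r mod l) (r div l))
      = lp_norm p ({..<l} \<times> {..<k}) (\<lambda>(i, j). a i j)"
    using lp_norm_reindex[OF bij_betw_mod_div, where p=p and f="\<lambda>(i, j). a i j"] by (simp add: comp_def)
  also have "\<dots> = lp_norm p {(i, j). a i j \<noteq> 0} (\<lambda>(i, j). a i j)"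
    using assms by (intro lp_norm_mono_neutral) auto
  finally show ?thesis unfolding coeff_lp_norm_def .
qed

lemma strict_plegma_interlace:
  fixes m :: "nat \<Rightarrow> nat"
  assumes "strict_mono_on {..<k * l} m" "\<forall>q<k * l. m q \<in> M"
  shows "strict_plegma M k l (\<lambda>i j. m (j * l + i))"
  unfolding strict_plegma_def
proof (intro conjI allI impI)
  fix i j assume "i < l" "j < k"
  then show "m (j * l + i) \<in> M" using assms(2) interlace_index_less[of i l j k] by simp
next
  fix i\<^sub>1 i\<^sub>2 j\<^sub>1 j\<^sub>2 assume ij: "i\<^sub>1 < l" "i\<^sub>2 < l" "j\<^sub>1 < k" "j\<^sub>2 < k" "j\<^sub>1 < j\<^sub>2"
  have "j\<^sub>1 * l + i\<^sub>1 < j\<^sub>2 * l" using interlace_index_less[OF ij(1,5)] .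
  then have "j\<^sub>1 * l + i\<^sub>1 < j\<^sub>2 * l + i\<^sub>2" by linarith
  moreover have "j\<^sub>1 * l + i\<^sub>1 \<in> {..<k * l}" "j\<^sub>2 * l + i\<^sub>2 \<in> {..<k * l}"
    using interlace_index_less ij by simp_all
  ultimately show "m (j\<^sub>1 * l + i\<^sub>1) < m (j\<^sub>2 * l + i\<^sub>2)"
    using strict_mono_onD[OF assms(1)] by blast
next
  fix i\<^sub>1 i\<^sub>2 j assume ij: "i\<^sub>1 < l" "i\<^sub>2 < l" "j < k" "i\<^sub>1 < i\<^sub>2"
  have "j * l + i\<^sub>1 \<in> {..<k * l}" "j * l + i\<^sub>2 \<in> {..<k * l}"
    using interlace_index_less ij by simp_all
  moreover have "j * l + i\<^sub>1 < j * l + i\<^sub>2" using ij(4) by simp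
  ultimately show "m (j * l + i\<^sub>1) < m (j * l + i\<^sub>2)"
    using strict_mono_onD[OF assms(1)] by blast
qed

section \<open>Weakly null sequences and finite-codimensional subspaces\<close>

lemma abs_coeff_mult_infdist_le:
  fixes Y :: "'a::real_normed_vector set"
  assumes "subspace Y" "w - t *\<^sub>R e \<in> Y"
  shows "\<bar>t\<bar> * infdist e Y \<le> norm w"
proof (cases "t = 0")
  case False
  have "e - (1/t) *\<^sub>R w = - ((1/t) *\<^sub>R (w - t *\<^sub>R e))"
    using False by (simp add: algebra_simps)
  also have "\<dots> \<in> Y" using assms by (simp add: subspace_neg subspace_scale)
  finally have "infdist e Y \<le> dist e (e - (1/t) *\<^sub>R w)" by (rule infdist_le)
  also have "\<dots> = norm w / \<bar>t\<bar>" by (simp add: dist_norm)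
  finally show ?thesis using False by (simp add: field_simps mult.commute)
qed simp

lemma infdist_closed_subspace_pos:
  fixes Y :: "'a::real_normed_vector set"
  assumes "closed Y" "subspace Y" "e \<notin> Y"
  shows "0 < infdist e Y"
proof -
  have "Y \<noteq> {}" using subspace_0[OF assms(2)] by blast
  then have "infdist e Y \<noteq> 0" using in_closed_iff_infdist_zero[OF assms(1)] assms(3) by blast
  then show ?thesis using infdist_nonneg[of e Y] by linarith
qed

lemma Cauchy_coeff_along_closed_subspace:
  fixes Y :: "'a::real_normed_vector set"
  assumes "closed Y" "subspace Y" "e \<notin> Y"
    and t: "\<And>n. w n - t n *\<^sub>R e \<in> Y" and "Cauchy w"
  shows "Cauchy t"
proof (rule metric_CauchyI)
  have r: "0 < infdist e Y" by (rule infdist_closed_subspace_pos[OF assms(1-3)])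
  have t_lipschitz: "dist (t m) (t n) * infdist e Y \<le> dist (w m) (w n)" for m n
  proof -
    have "(w m - w n) - (t m - t n) *\<^sub>R e = (w m - t m *\<^sub>R e) - (w n - t n *\<^sub>R e)"
      by (simp add: algebra_simps)
    also have "\<dots> \<in> Y" using t assms(2) by (simp add: subspace_diff)
    finally have "\<bar>t m - t n\<bar> * infdist e Y \<le> norm (w m - w n)"
      by (rule abs_coeff_mult_infdist_le[OF assms(2)])
    then show ?thesis by (simp add: dist_norm dist_real_def)
  qed
  fix \<epsilon> :: real assume "0 < \<epsilon>"
  then have "0 < \<epsilon> * infdist e Y" using r by simp
  then obtain M where M: "\<And>m n. M \<le> m \<Longrightarrow> M \<le> n \<Longrightarrow> dist (w m) (w n) < \<epsilon> * infdist e Y"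
    using metric_CauchyD[OF \<open>Cauchy w\<close>] by blast
  have "dist (t m) (t n) < \<epsilon>" if "M \<le> m" "M \<le> n" for m n
  proof -
    have "dist (t m) (t n) * infdist e Y < \<epsilon> * infdist e Y"
      using t_lipschitz[of m n] M[OF that] by linarith
    then show ?thesis using r by simp
  qed
  then show "\<exists>M. \<forall>m\<ge>M. \<forall>n\<ge>M. dist (t m) (t n) < \<epsilon>" by blast
qed

lemma closed_span_insert_closed_subspace:
  fixes Y :: "'a::banach set"
  assumes "closed Y" "subspace Y"
  shows "closed (span (insert e Y))"
proof (cases "e \<in> Y")
  case True
  then have "span (insert e Y) = Y" using assms(2) by (simp add: insert_absorb)
  then show ?thesis using assms(1) by simp
next
  case False
  have "span Y = Y" using assms(2) by simp
  then have span_eq: "span (insert e Y) = {x. \<exists>t. x - t *\<^sub>R e \<in> Y}"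
    unfolding span_insert by (simp only: \<open>span Y = Y\<close>)
  show ?thesis unfolding span_eq
  proof (rule closed_sequential_limits[THEN iffD2], intro allI impI, elim conjE)
    fix w z assume "\<forall>n. w n \<in> {x. \<exists>t. x - t *\<^sub>R e \<in> Y}" and lim: "w \<longlonglongrightarrow> z"
    then obtain t where t: "\<And>n. w n - t n *\<^sub>R e \<in> Y" by simp metis
    have "Cauchy t"
      using Cauchy_coeff_along_closed_subspace[OF assms False t LIMSEQ_imp_Cauchy[OF lim]] .
    then obtain t\<^sub>0 where "t \<longlonglongrightarrow> t\<^sub>0" using Cauchy_convergent_iff convergent_def by blast
    then have "(\<lambda>n. w n - t n *\<^sub>R e) \<longlonglongrightarrow> z - t\<^sub>0 *\<^sub>R e" by (intro tendsto_intros lim)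
    then have "z - t\<^sub>0 *\<^sub>R e \<in> Y"
      using closed_sequential_limits[THEN iffD1, OF assms(1), rule_format, of "\<lambda>n. w n - t n *\<^sub>R e"] t
      by simp
    then show "z \<in> {x. \<exists>t. x - t *\<^sub>R e \<in> Y}" by blast
  qed
qed

lemma bounded_linear_coordinate_functional:
  fixes Y :: "'a::real_normed_vector set"
  assumes "closed Y" "subspace Y" "e \<notin> Y"
    and P: "bounded_linear P" "\<And>x. x - P x \<in> span (insert e Y)"
  shows "\<exists>h. bounded_linear h \<and> (\<forall>x. x - P x - h x *\<^sub>R e \<in> Y)"
proof -
  have "span Y = Y" using assms(2) by simp
  then have "\<forall>x. \<exists>t. x - P x - t *\<^sub>R e \<in> Y" using P(2) unfolding span_insert \<open>span Y = Y\<close> by blast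
  then obtain h where h: "\<And>x. x - P x - h x *\<^sub>R e \<in> Y" by metis
  have unique: "s = t" if "w - s *\<^sub>R e \<in> Y" "w - t *\<^sub>R e \<in> Y" for w s t
  proof (rule ccontr)
    assume "s \<noteq> t"
    have "(w - s *\<^sub>R e) - (w - t *\<^sub>R e) \<in> Y" using subspace_diff[OF assms(2) that] .
    moreover have "(w - s *\<^sub>R e) - (w - t *\<^sub>R e) = (t - s) *\<^sub>R e" by (simp add: algebra_simps)
    ultimately have "(t - s) *\<^sub>R e \<in> Y" by simp
    then have "(1 / (t - s)) *\<^sub>R ((t - s) *\<^sub>R e) \<in> Y" by (rule subspace_scale[OF assms(2)])
    then show False using \<open>s \<noteq> t\<close> assms(3) by simp
  qed
  interpret P: bounded_linear P by (rule P(1))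
  have h_add: "h (x + z) = h x + h z" for x z
  proof (rule unique)
    have "(x + z) - P (x + z) - (h x + h z) *\<^sub>R e = (x - P x - h x *\<^sub>R e) + (z - P z - h z *\<^sub>R e)"
      by (simp add: P.add algebra_simps)
    also have "\<dots> \<in> Y" using subspace_add[OF assms(2) h h] .
    finally show "(x + z) - P (x + z) - (h x + h z) *\<^sub>R e \<in> Y" .
  qed (rule h)
  have h_scale: "h (c *\<^sub>R x) = c * h x" for c x
  proof (rule unique)
    have "c *\<^sub>R x - P (c *\<^sub>R x) - (c * h x) *\<^sub>R e = c *\<^sub>R (x - P x - h x *\<^sub>R e)"
      by (simp add: P.scaleR algebra_simps)
    also have "\<dots> \<in> Y" using subspace_scale[OF assms(2) h] .
    finally show "c *\<^sub>R x - P (c *\<^sub>R x) - (c * h x) *\<^sub>R e \<in> Y" .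
  qed (rule h)
  obtain K where K: "\<And>x. norm (P x) \<le> norm x * K" using P.bounded by blast
  have h_bound: "norm (h x) \<le> norm x * ((1 + K) / infdist e Y)" for x
  proof -
    have "\<bar>h x\<bar> * infdist e Y \<le> norm (x - P x)"
      using abs_coeff_mult_infdist_le[OF assms(2) h[of x]] by simp
    also have "\<dots> \<le> norm x * (1 + K)"
      using norm_triangle_ineq4[of x "P x"] K[of x] by (simp add: algebra_simps)
    finally show ?thesis
      using infdist_closed_subspace_pos[OF assms(1-3)] by (simp add: field_simps)
  qed
  have "bounded_linear h" by (rule bounded_linear_intro[OF h_add _ h_bound]) (simp add: h_scale)
  with h show ?thesis by blast
qed

(* The complement is added one vector e at a time; the new correction term h x *R e is a
   bounded functional times a fixed vector, so it sends weakly null sequences to null ones. *)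
lemma fin_codim_residual_operator:
  fixes Y :: "'a::banach set"
  assumes "finite F" "closed Y" "subspace Y" "span (Y \<union> F) = UNIV"
  shows "\<exists>P. bounded_linear P \<and> (\<forall>x. x - P x \<in> Y) \<and>
    (\<forall>x. weakly_null x \<longrightarrow> (\<lambda>n. P (x n)) \<longlonglongrightarrow> 0)"
  using assms
proof (induction F arbitrary: Y rule: finite_induct)
  case empty
  then have "Y = UNIV" by (metis Un_empty_right span_eq_iff)
  then show ?case by (intro exI[of _ "\<lambda>x. 0"]) auto
next
  case (insert e F Y)
  show ?case
  proof (cases "e \<in> Y")
    case True
    then have "Y \<union> insert e F = Y \<union> F" by blast
    then show ?thesis using insert by simp
  next
    case False
    define Y' where "Y' = span (insert e Y)"
    have "span (Y \<union> insert e F) \<subseteq> span (Y' \<union> F)"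
      by (rule span_mono) (auto simp: Y'_def intro: span_base)
    then have "span (Y' \<union> F) = UNIV" using insert.prems(3) by auto
    then obtain P where P: "bounded_linear P" "\<And>x. x - P x \<in> Y'"
      "\<And>x. weakly_null x \<Longrightarrow> (\<lambda>n. P (x n)) \<longlonglongrightarrow> 0"
      using insert.IH[of Y'] closed_span_insert_closed_subspace[OF insert.prems(1,2)]
      unfolding Y'_def by auto
    obtain h where h: "bounded_linear h" "\<And>x. x - P x - h x *\<^sub>R e \<in> Y"
      using bounded_linear_coordinate_functional[OF insert.prems(1,2) False P(1)] P(2)
      unfolding Y'_def by blast
    have "(\<lambda>n. P (x n) + h (x n) *\<^sub>R e) \<longlonglongrightarrow> 0 + 0 *\<^sub>R e" if "weakly_null x" for x
    proof (intro tendsto_intros)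
      show "(\<lambda>n. P (x n)) \<longlonglongrightarrow> 0" using P(3) that .
      show "(\<lambda>n. h (x n)) \<longlonglongrightarrow> 0" using that h(1) unfolding weakly_null_def by blast
    qed
    moreover have "bounded_linear (\<lambda>x. P x + h x *\<^sub>R e)"
      by (intro bounded_linear_add P(1) bounded_linear_scaleR_const h(1))
    ultimately show ?thesis using h(2) by (intro exI[of _ "\<lambda>x. P x + h x *\<^sub>R e"]) (simp add: algebra_simps)
  qed
qed

lemma weakly_null_eventually_near_fin_codim:
  fixes x :: "nat \<Rightarrow> 'a::banach"
  assumes "weakly_null x" "fin_codim_subspace Y" "0 < \<epsilon>"
  shows "\<forall>\<^sub>F n in sequentially. \<exists>y\<in>Y. norm (x n - y) < \<epsilon>"
proof -
  obtain F where "finite F" "span (Y \<union> F) = UNIV" "closed Y" "subspace Y"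
    using assms(2) unfolding fin_codim_subspace_def by blast
  then obtain P where P: "\<And>z. z - P z \<in> Y" "(\<lambda>n. P (x n)) \<longlonglongrightarrow> 0"
    using fin_codim_residual_operator assms(1) by blast
  have "\<forall>\<^sub>F n in sequentially. norm (P (x n)) < \<epsilon>"
    using P(2) assms(3) by (simp add: tendsto_iff dist_norm order_tendsto_iff)
  then show ?thesis
  proof eventually_elim
    case (elim n)
    show ?case using elim P(1)[of "x n"] by (intro bexI[of _ "x n - P (x n)"]) simp_all
  qed
qed

section \<open>Playing the asymptotic game along weakly null sequences\<close>

lemma norm_sgn_diff_le:
  fixes x z :: "'a::real_normed_vector"
  assumes "norm x = 1" "z \<noteq> 0"
  shows "norm (sgn z - x) \<le> 2 * norm (z - x)"
proof -
  have "sgn z - z = (1 / norm z - 1) *\<^sub>R z" by (simp add: sgn_div_norm inverse_eq_divide algebra_simps)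
  then have "norm (sgn z - z) = \<bar>(1 / norm z - 1) * norm z\<bar>" by (simp add: abs_mult)
  also have "\<dots> = \<bar>norm x - norm z\<bar>" using assms by (simp add: left_diff_distrib)
  also have "\<dots> \<le> norm (z - x)"
    using norm_triangle_ineq3[of x z] by (simp add: norm_minus_commute)
  finally have "norm (sgn z - z) \<le> norm (z - x)" .
  then have "norm (sgn z - x) \<le> norm (z - x) + norm (z - x)"
    by (rule norm_diff_triangle_le[OF _ order_refl])
  then show ?thesis by simp
qed

lemma fin_codim_unit_near_weakly_null:
  fixes u :: "nat \<Rightarrow> 'a::banach"
  assumes "fin_codim_subspace Y" "weakly_null u" "\<And>n. norm (u n) = 1" "infinite M" "0 < \<epsilon>"
  obtains n y where "n \<in> M" "B \<le> n" "y \<in> Y" "norm y = 1" "norm (y - u n) < \<epsilon>"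
proof -
  define \<epsilon>' where "\<epsilon>' = min 1 \<epsilon> / 2"
  have "0 < \<epsilon>'" using assms(5) by (simp add: \<epsilon>'_def)
  then obtain N\<^sub>0 where near: "\<And>n. N\<^sub>0 \<le> n \<Longrightarrow> \<exists>v\<in>Y. norm (u n - v) < \<epsilon>'"
    using weakly_null_eventually_near_fin_codim[OF assms(2,1)] unfolding eventually_sequentially
    by blast
  obtain n where n: "n \<in> M" "N\<^sub>0 + B \<le> n" using assms(4) infinite_nat_iff_unbounded_le by blast
  obtain v where v: "v \<in> Y" "norm (u n - v) < \<epsilon>'" using near[of n] n(2) by auto
  have "v \<noteq> 0" using v(2) assms(3)[of n] by (auto simp: \<epsilon>'_def)
  then have "norm (sgn v - u n) \<le> 2 * norm (v - u n)" by (intro norm_sgn_diff_le assms(3))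
  also have "\<dots> < min 1 \<epsilon>" using v(2) by (simp add: \<epsilon>'_def norm_minus_commute)
  finally have close: "norm (sgn v - u n) < \<epsilon>" by linarith
  have "subspace Y" using assms(1) unfolding fin_codim_subspace_def by blast
  then have "sgn v \<in> Y" "norm (sgn v) = 1"
    using v(1) \<open>v \<noteq> 0\<close> by (simp_all add: sgn_div_norm subspace_scale norm_sgn)
  with n close show thesis by (intro that[of n "sgn v"]) simp_all
qed

lemma vector_player_follows_weakly_null:
  fixes z :: "nat \<Rightarrow> nat \<Rightarrow> 'a::banach"
  assumes fin_codim: "\<And>h. fin_codim_subspace (\<sigma> h)"
    and null: "\<And>q. weakly_null (z q)" and unit: "\<And>q m. norm (z q m) = 1"
    and "infinite M" "0 < \<epsilon>"
  shows "\<exists>m y. strict_mono_on {..<r} m \<and> (\<forall>q<r. m q \<in> M \<and> T \<le> m q \<and>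
    y q \<in> \<sigma> (map y [0..<q]) \<and> norm (y q) = 1 \<and> norm (y q - z q (m q)) < \<epsilon>)"
proof (induction r)
  case 0
  show ?case by (simp add: strict_mono_on_def)
next
  case (Suc r)
  then obtain m y where mono: "strict_mono_on {..<r} m" and play: "\<forall>q<r. m q \<in> M \<and> T \<le> m q \<and>
    y q \<in> \<sigma> (map y [0..<q]) \<and> norm (y q) = 1 \<and> norm (y q - z q (m q)) < \<epsilon>"
    by blast
  obtain m' v where m': "m' \<in> M" "T + Suc (\<Sum>q<r. m q) \<le> m'"
    and v: "v \<in> \<sigma> (map y [0..<r])" "norm v = 1" "norm (v - z r m') < \<epsilon>"
    using fin_codim_unit_near_weakly_null[OF fin_codim null[of r] unit[of r] \<open>infinite M\<close> \<open>0 < \<epsilon>\<close>,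
      where B="T + Suc (\<Sum>q<r. m q)"] by blast
  have below: "m q < m'" if "q < r" for q
    using member_le_sum[of q "{..<r}" m] that m'(2) by simp
  have history: "map (y(r := v)) [0..<q] = map y [0..<q]" if "q \<le> r" for q
    using that by (intro map_cong) auto
  have "strict_mono_on {..<Suc r} (m(r := m'))"
  proof (rule strict_mono_onI)
    fix a b assume "a \<in> {..<Suc r}" "b \<in> {..<Suc r}" "a < b"
    then show "(m(r := m')) a < (m(r := m')) b"
      using below strict_mono_onD[OF mono] by (cases "b = r") auto
  qed
  moreover have "(m(r := m')) q \<in> M \<and> T \<le> (m(r := m')) q \<and>
      (y(r := v)) q \<in> \<sigma> (map (y(r := v)) [0..<q]) \<and> norm ((y(r := v)) q) = 1 \<and>
      norm ((y(r := v)) q - z q ((m(r := m')) q)) < \<epsilon>" if "q < Suc r" for q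
  proof (cases "q = r")
    case True
    then show ?thesis using m' v history[of r] by simp
  next
    case False
    then show ?thesis using play history[of q] that by simp
  qed
  ultimately show ?case by blast
qed

lemma norm_sum_scaleR_diff_le:
  fixes u v :: "'i \<Rightarrow> 'a::real_normed_vector" and \<epsilon> :: real
  assumes "\<And>r. r \<in> I \<Longrightarrow> \<bar>a r\<bar> \<le> 1" "\<And>r. r \<in> I \<Longrightarrow> norm (u r - v r) \<le> \<epsilon>"
  shows "norm ((\<Sum>r\<in>I. a r *\<^sub>R u r) - (\<Sum>r\<in>I. a r *\<^sub>R v r)) \<le> card I * \<epsilon>"
proof -
  have "norm ((\<Sum>r\<in>I. a r *\<^sub>R u r) - (\<Sum>r\<in>I. a r *\<^sub>R v r)) = norm (\<Sum>r\<in>I. a r *\<^sub>R (u r - v r))"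
    by (simp add: sum_subtractf scaleR_diff_right)
  also have "\<dots> \<le> (\<Sum>r\<in>I. \<bar>a r\<bar> * norm (u r - v r))"
    by (rule order_trans[OF norm_sum]) simp
  also have "\<dots> \<le> (\<Sum>r\<in>I. \<epsilon>)"
  proof (rule sum_mono)
    fix r assume "r \<in> I"
    then show "\<bar>a r\<bar> * norm (u r - v r) \<le> \<epsilon>"
      using assms mult_mono[of "\<bar>a r\<bar>" 1 "norm (u r - v r)" \<epsilon>] by simp
  qed
  finally show ?thesis by simp
qed

lemma equiv_lpn_bounds:
  fixes y :: "nat \<Rightarrow> 'a::real_normed_vector"
  assumes "equiv_lpn p C n y" "0 < n" "norm (y 0) = 1"
  shows "lp_norm p {..<n} a / C \<le> norm (\<Sum>i<n. a i *\<^sub>R y i)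
    \<and> norm (\<Sum>i<n. a i *\<^sub>R y i) \<le> C * lp_norm p {..<n} a"
proof -
  obtain c D where cD: "0 < c" "0 < D" "D / c \<le> C"
    and bounds: "\<And>a. c * lp_norm p {..<n} a \<le> norm (\<Sum>i<n. a i *\<^sub>R y i)
      \<and> norm (\<Sum>i<n. a i *\<^sub>R y i) \<le> D * lp_norm p {..<n} a"
    using assms(1) unfolding equiv_lpn_def by blast
  define e where "e i = (if i = 0 then 1 else 0 :: real)" for i :: nat
  have "(\<Sum>i<n. e i *\<^sub>R y i) = (\<Sum>i<n. if i = 0 then y i else 0)"
    unfolding e_def by (intro sum.cong) auto
  also have "\<dots> = y 0" using assms(2) by simp
  finally have "(\<Sum>i<n. e i *\<^sub>R y i) = y 0" .
  moreover have "lp_norm p {..<n} e = 1" unfolding e_def using assms(2) by (intro lp_norm_unit_vector) auto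
  ultimately have c1: "c \<le> 1" and D1: "1 \<le> D" using bounds[of e] assms(3) by auto
  have DC: "D \<le> C * c" using cD by (simp add: field_simps)
  have C0: "0 < C" using cD by (smt (verit) divide_pos_pos)
  have "1 / C \<le> c" using D1 DC C0 by (simp add: field_simps)
  moreover have "D \<le> C" using DC mult_left_le[OF c1, of C] C0 by linarith
  moreover have "0 \<le> lp_norm p {..<n} a" by (simp add: lp_norm_nonneg)
  ultimately have "lp_norm p {..<n} a / C \<le> c * lp_norm p {..<n} a"
    and "D * lp_norm p {..<n} a \<le> C * lp_norm p {..<n} a"
    using mult_right_mono by fastforce+
  then show ?thesis using bounds[of a] by linarith
qed

lemma norm_bounds_of_close:
  fixes u v :: "'a::real_normed_vector"
  assumes "norm (u - v) \<le> \<eta>" "L / C \<le> norm v" "norm v \<le> C * L"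
  shows "L / C - \<eta> \<le> norm u \<and> norm u \<le> C * L + \<eta>"
  using norm_triangle_ineq3[of u v] assms unfolding abs_le_iff by linarith

(* The game is played in the interlaced order r = j * l + i, so that (V)'s r-th move
   approximates x i (s i j). *)
lemma asymptotic_lp_plegma_estimate:
  fixes x :: "nat \<Rightarrow> nat \<Rightarrow> 'a::banach" and \<sigma> :: "'a list \<Rightarrow> 'a set"
    and a :: "nat \<Rightarrow> nat \<Rightarrow> real"
  assumes win: "winning_strategy p (k * l) C \<sigma>" and "0 < k" "0 < l"
    and F: "\<forall>i<l. F0 (x i)" and "infinite M" and "0 < \<eta>" and a: "\<forall>i j. \<bar>a i j\<bar> \<le> 1"
  shows "\<exists>s. strict_plegma M k l s \<and> T \<le> s 0 0 \<and>
    lp_norm p {..<k * l} (\<lambda>r. a (r mod l) (r div l)) / C - \<eta>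
      \<le> norm (\<Sum>j<k. \<Sum>i<l. a i j *\<^sub>R x i (s i j)) \<and>
    norm (\<Sum>j<k. \<Sum>i<l. a i j *\<^sub>R x i (s i j))
      \<le> C * lp_norm p {..<k * l} (\<lambda>r. a (r mod l) (r div l)) + \<eta>"
proof -
  define n where "n = k * l"
  have n: "0 < n" using assms(2,3) by (simp add: n_def)
  have fin_codim: "\<And>h. fin_codim_subspace (\<sigma> h)" using win unfolding winning_strategy_def by blast
  have null: "weakly_null (x (q mod l))" and unit: "norm (x (q mod l) m) = 1" for q m
    using F \<open>0 < l\<close> unfolding F0_def by auto
  have "0 < \<eta> / n" using \<open>0 < \<eta>\<close> n by simp
  then have "\<exists>m y. strict_mono_on {..<n} m \<and> (\<forall>q<n. m q \<in> M \<and> T \<le> m q \<and>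
      y q \<in> \<sigma> (map y [0..<q]) \<and> norm (y q) = 1 \<and> norm (y q - x (q mod l) (m q)) < \<eta> / n)"
    using fin_codim null unit \<open>infinite M\<close>
    by (intro vector_player_follows_weakly_null[where z="\<lambda>q. x (q mod l)"])
  then obtain m y where mono: "strict_mono_on {..<n} m"
    and play: "\<And>q. q < n \<Longrightarrow> m q \<in> M \<and> T \<le> m q \<and> y q \<in> \<sigma> (map y [0..<q]) \<and>
      norm (y q) = 1 \<and> norm (y q - x (q mod l) (m q)) < \<eta> / n"
    by blast
  define s where "s i j = m (j * l + i)" for i j
  have "strict_plegma M k l s"
    unfolding s_def by (rule strict_plegma_interlace) (use mono play in \<open>simp_all add: n_def\<close>)
  moreover have "T \<le> s 0 0" using play[OF n] by (simp add: s_def)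
  moreover define b where "b r = a (r mod l) (r div l)" for r
  have sum_eq: "(\<Sum>j<k. \<Sum>i<l. a i j *\<^sub>R x i (s i j)) = (\<Sum>r<n. b r *\<^sub>R x (r mod l) (m r))"
    unfolding sum_interlace s_def b_def n_def by simp
  have "norm ((\<Sum>r\<in>{..<n}. b r *\<^sub>R x (r mod l) (m r)) - (\<Sum>r\<in>{..<n}. b r *\<^sub>R y r))
      \<le> real (card {..<n}) * (\<eta> / n)"
  proof (rule norm_sum_scaleR_diff_le)
    fix r assume "r \<in> {..<n}"
    then show "\<bar>b r\<bar> \<le> 1" "norm (x (r mod l) (m r) - y r) \<le> \<eta> / n"
      using a play[of r] by (simp_all add: b_def norm_minus_commute)
  qed
  then have close: "norm ((\<Sum>r<n. b r *\<^sub>R x (r mod l) (m r)) - (\<Sum>r<n. b r *\<^sub>R y r)) \<le> \<eta>"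
    using n by simp
  have "equiv_lpn p C n y" using win play unfolding winning_strategy_def n_def by blast
  then have y_bounds: "lp_norm p {..<n} b / C \<le> norm (\<Sum>r<n. b r *\<^sub>R y r)
      \<and> norm (\<Sum>r<n. b r *\<^sub>R y r) \<le> C * lp_norm p {..<n} b"
    using equiv_lpn_bounds n play[OF n] by blast
  have "lp_norm p {..<n} b / C - \<eta> \<le> norm (\<Sum>r<n. b r *\<^sub>R x (r mod l) (m r))
      \<and> norm (\<Sum>r<n. b r *\<^sub>R x (r mod l) (m r)) \<le> C * lp_norm p {..<n} b + \<eta>"
    using norm_bounds_of_close[OF close conjunct1[OF y_bounds] conjunct2[OF y_bounds]] .
  ultimately have "strict_plegma M k l s \<and> T \<le> s 0 0 \<and>
    lp_norm p {..<k * l} (\<lambda>r. a (r mod l) (r div l)) / C - \<eta>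
      \<le> norm (\<Sum>j<k. \<Sum>i<l. a i j *\<^sub>R x i (s i j)) \<and>
    norm (\<Sum>j<k. \<Sum>i<l. a i j *\<^sub>R x i (s i j))
      \<le> C * lp_norm p {..<k * l} (\<lambda>r. a (r mod l) (r div l)) + \<eta>"
    unfolding sum_eq b_def[symmetric] n_def[symmetric] by blast
  then show ?thesis by blast
qed

section \<open>Joint spreading models of Asymptotic l_p spaces\<close>

lemma le_of_le_plus_vanishing:
  fixes u v :: real
  assumes "\<delta> \<longlonglongrightarrow> 0" "\<And>k \<eta>. k\<^sub>0 \<le> k \<Longrightarrow> 0 < \<eta> \<Longrightarrow> u \<le> v + \<eta> + \<delta> k"
  shows "u \<le> v"
proof -
  have "u - v \<le> \<delta> k" if "k\<^sub>0 \<le> k" for k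
  proof (rule field_le_epsilon)
    fix \<eta> :: real assume "0 < \<eta>"
    then show "u - v \<le> \<delta> k + \<eta>" using assms(2)[OF that] by fastforce
  qed
  then have "u - v \<le> 0" using LIMSEQ_le_const[OF assms(1), of "u - v"] by blast
  then show ?thesis by simp
qed

lemma fsupp_bounded:
  assumes "fsupp l a"
  obtains k where "\<And>i j. a i j \<noteq> 0 \<Longrightarrow> i < l \<and> j < k"
proof -
  have "finite (snd ` {(i, j). a i j \<noteq> 0})" using assms by (simp add: fsupp_def)
  then obtain k where "\<forall>j \<in> snd ` {(i, j). a i j \<noteq> 0}. j < k"
    using finite_nat_set_iff_bounded by blast
  moreover have "j \<in> snd ` {(i, j). a i j \<noteq> 0}" if "a i j \<noteq> 0" for i j
    using that by (intro image_eqI[of _ snd "(i, j)"]) auto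
  ultimately have "a i j \<noteq> 0 \<Longrightarrow> i < l \<and> j < k" for i j
    using assms unfolding fsupp_def by blast
  then show thesis by (rule that)
qed

lemma generates_jsm_lp_bounds_bounded_coeffs:
  fixes x :: "nat \<Rightarrow> nat \<Rightarrow> 'a::banach"
  assumes strat: "\<forall>n. \<exists>\<sigma> :: 'a list \<Rightarrow> 'a set. winning_strategy p n C \<sigma>"
    and "0 < l" and F: "\<forall>i<l. F0 (x i)" and gen: "generates_jsm l x N"
    and "fsupp l a" and a: "\<forall>i j. \<bar>a i j\<bar> \<le> 1"
  shows "coeff_lp_norm p a / C \<le> N a \<and> N a \<le> C * coeff_lp_norm p a"
proof -
  obtain M \<delta> where M: "infinite M" and \<delta>: "\<delta> \<longlonglongrightarrow> 0"
    and approx: "\<And>k a s. 1 \<le> k \<Longrightarrow> \<forall>i j. \<bar>a i j\<bar> \<le> 1 \<Longrightarrow> strict_plegma M k l s \<Longrightarrow>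
      enumerate M (k - 1) \<le> s 0 0 \<Longrightarrow>
      \<bar>norm (\<Sum>j<k. \<Sum>i<l. a i j *\<^sub>R x i (s i j)) - N (\<lambda>i j. if i < l \<and> j < k then a i j else 0)\<bar>
        < \<delta> k"
    using gen unfolding generates_jsm_def by blast
  obtain k\<^sub>0 where supp: "\<And>i j. a i j \<noteq> 0 \<Longrightarrow> i < l \<and> j < k\<^sub>0"
    using fsupp_bounded[OF \<open>fsupp l a\<close>] by blast
  define L where "L = coeff_lp_norm p a"
  have bounds: "L / C - \<eta> - \<delta> k \<le> N a \<and> N a \<le> C * L + \<eta> + \<delta> k" if k: "max 1 k\<^sub>0 \<le> k" and "0 < \<eta>" for k \<eta>
  proof -
    obtain \<sigma> :: "'a list \<Rightarrow> 'a set" where win: "winning_strategy p (k * l) C \<sigma>" using strat by blast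
    have supp_k: "\<And>i j. a i j \<noteq> 0 \<Longrightarrow> i < l \<and> j < k" using supp k by fastforce
    then have lp: "lp_norm p {..<k * l} (\<lambda>r. a (r mod l) (r div l)) = L"
      unfolding L_def by (rule lp_norm_interlace)
    have trunc: "(\<lambda>i j. if i < l \<and> j < k then a i j else 0) = a"
      using supp_k by (intro ext) auto
    have "0 < k" using k by simp
    then obtain s where s: "strict_plegma M k l s" "enumerate M (k - 1) \<le> s 0 0"
      and estimate: "L / C - \<eta> \<le> norm (\<Sum>j<k. \<Sum>i<l. a i j *\<^sub>R x i (s i j))"
        "norm (\<Sum>j<k. \<Sum>i<l. a i j *\<^sub>R x i (s i j)) \<le> C * L + \<eta>"
      using asymptotic_lp_plegma_estimate[OF win _ \<open>0 < l\<close> F M \<open>0 < \<eta>\<close> a] unfolding lp by blast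
    have "\<bar>norm (\<Sum>j<k. \<Sum>i<l. a i j *\<^sub>R x i (s i j)) - N a\<bar> < \<delta> k"
      using approx[OF _ a s] k unfolding trunc by simp
    then show ?thesis using estimate unfolding abs_less_iff by linarith
  qed
  have "L / C \<le> N a"
    by (rule le_of_le_plus_vanishing[OF \<delta>, where k\<^sub>0="max 1 k\<^sub>0"]) (use bounds in fastforce)
  moreover have "N a \<le> C * L"
    by (rule le_of_le_plus_vanishing[OF \<delta>, where k\<^sub>0="max 1 k\<^sub>0"]) (use bounds in fastforce)
  ultimately show ?thesis unfolding L_def by simp
qed

(* generates_jsm only controls coefficients in [-1, 1]; the homogeneity of N and of the
   l_p norm carries the bounds over to all arrays. *)
lemma generates_jsm_lp_bounds:
  fixes x :: "nat \<Rightarrow> nat \<Rightarrow> 'a::banach"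
  assumes strat: "\<forall>n. \<exists>\<sigma> :: 'a list \<Rightarrow> 'a set. winning_strategy p n C \<sigma>" and "0 < p"
    and "0 < l" and F: "\<forall>i<l. F0 (x i)" and gen: "generates_jsm l x N" and "fsupp l a"
  shows "coeff_lp_norm p a / C \<le> N a \<and> N a \<le> C * coeff_lp_norm p a"
proof -
  define S where "S = {(i, j). a i j \<noteq> 0}"
  have "finite S" using \<open>fsupp l a\<close> unfolding fsupp_def S_def by simp
  define \<mu> where "\<mu> = 1 + (\<Sum>(i, j)\<in>S. \<bar>a i j\<bar>)"
  have \<mu>: "0 < \<mu>" unfolding \<mu>_def by (smt (verit) sum_nonneg case_prod_beta abs_ge_zero)
  have "\<bar>a i j\<bar> \<le> \<mu>" for i j
  proof (cases "(i, j) \<in> S")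
    case True
    have "(\<lambda>(i, j). \<bar>a i j\<bar>) (i, j) \<le> (\<Sum>(i, j)\<in>S. \<bar>a i j\<bar>)"
      by (rule member_le_sum[OF True]) (auto simp: \<open>finite S\<close> case_prod_beta)
    then have "\<bar>a i j\<bar> \<le> (\<Sum>(i, j)\<in>S. \<bar>a i j\<bar>)" by simp
    then show ?thesis unfolding \<mu>_def by simp
  qed (use \<mu> S_def in simp)
  define b where "b i j = a i j / \<mu>" for i j
  have b: "\<forall>i j. \<bar>b i j\<bar> \<le> 1" unfolding b_def using \<open>\<And>i j. \<bar>a i j\<bar> \<le> \<mu>\<close> \<mu> by (simp add: abs_div)
  have "fsupp l b" using \<open>fsupp l a\<close> \<mu> unfolding fsupp_def b_def by simp
  have supp_b: "{(i, j). b i j \<noteq> 0} = S" unfolding b_def S_def using \<mu> by simp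
  have a_eq: "a = (\<lambda>i j. \<mu> * b i j)" unfolding b_def using \<mu> by simp
  have N_a: "N a = \<mu> * N b"
    using gen \<open>fsupp l b\<close> \<mu> unfolding a_eq generates_jsm_def array_seminorm_def by simp
  have "(\<lambda>(i, j). a i j) = (\<lambda>z. \<mu> * (\<lambda>(i, j). b i j) z)" unfolding a_eq by auto
  then have lp_a: "lp_norm p S (\<lambda>(i, j). a i j) = \<mu> * lp_norm p S (\<lambda>(i, j). b i j)"
    using lp_norm_scale[OF less_imp_le[OF \<mu>] \<open>finite S\<close> \<open>0 < p\<close>] by (simp only:)
  have bounds_b: "lp_norm p S (\<lambda>(i, j). b i j) / C \<le> N b" "N b \<le> C * lp_norm p S (\<lambda>(i, j). b i j)"
    using generates_jsm_lp_bounds_bounded_coeffs[OF strat \<open>0 < l\<close> F gen \<open>fsupp l b\<close> b]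
    unfolding coeff_lp_norm_def supp_b by simp_all
  have "\<mu> * (lp_norm p S (\<lambda>(i, j). b i j) / C) \<le> \<mu> * N b"
    "\<mu> * N b \<le> \<mu> * (C * lp_norm p S (\<lambda>(i, j). b i j))"
    using mult_left_mono[OF bounds_b(1) less_imp_le[OF \<mu>]] mult_left_mono[OF bounds_b(2) less_imp_le[OF \<mu>]]
    by simp_all
  then show ?thesis unfolding coeff_lp_norm_def S_def[symmetric] N_a lp_a by (simp add: mult.left_commute)
qed

lemma jsm_equiv_of_common_bounds:
  assumes "0 < C"
    and N\<^sub>1: "\<And>a. fsupp l a \<Longrightarrow> L a / C \<le> N\<^sub>1 a \<and> N\<^sub>1 a \<le> C * L a"
    and N\<^sub>2: "\<And>a. fsupp l a \<Longrightarrow> L a / C \<le> N\<^sub>2 a \<and> N\<^sub>2 a \<le> C * L a"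
  shows "jsm_equiv (C ^ 4) l N\<^sub>1 N\<^sub>2"
proof -
  have "N \<le> C\<^sup>2 * N'" if "L / C \<le> N'" "N \<le> C * L" for L N N' :: real
  proof -
    have "L \<le> C * N'" using that(1) \<open>0 < C\<close> by (simp add: pos_divide_le_eq mult.commute)
    then have "C * L \<le> C\<^sup>2 * N'" using \<open>0 < C\<close> by (simp add: power2_eq_square mult.assoc)
    then show ?thesis using that(2) by linarith
  qed
  then have "1 / C\<^sup>2 * N\<^sub>1 a \<le> N\<^sub>2 a \<and> N\<^sub>2 a \<le> C\<^sup>2 * N\<^sub>1 a" if "fsupp l a" for a
    using N\<^sub>1[OF that] N\<^sub>2[OF that] \<open>0 < C\<close> by (auto simp: field_simps)
  moreover have "C\<^sup>2 / (1 / C\<^sup>2) = C ^ 4" by (simp add: power2_eq_square power4_eq_xxxx)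
  ultimately show ?thesis
    unfolding jsm_equiv_def using \<open>0 < C\<close> by (intro exI[of _ "1 / C\<^sup>2"] exI[of _ "C\<^sup>2"]) simp
qed

lemma jsm_equiv_lp_of_bounds:
  assumes "0 < C" "\<And>a. fsupp l a \<Longrightarrow> coeff_lp_norm p a / C \<le> N a \<and> N a \<le> C * coeff_lp_norm p a"
  shows "jsm_equiv_lp p l N"
proof -
  have "\<forall>a. fsupp l a \<longrightarrow> 1 / C * coeff_lp_norm p a \<le> N a \<and> N a \<le> C * coeff_lp_norm p a"
    using assms(2) by simp
  moreover have "0 < 1 / C" using assms(1) by simp
  ultimately show ?thesis unfolding jsm_equiv_lp_def coeff_lp_norm_def using assms(1) by blast
qed

theorem corollary4p12:
  fixes p :: ereal
  assumes "1 \<le> p"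
    and "asymptotic_lp TYPE('a::banach) p"
  shows "unif_unique_jsm_F0 TYPE('a) \<and>
    (\<forall>l\<ge>1. \<forall>(x :: nat \<Rightarrow> nat \<Rightarrow> 'a) N.
       (\<forall>i<l. F0 (x i)) \<longrightarrow> generates_jsm l x N \<longrightarrow> jsm_equiv_lp p l N)"
proof -
  obtain C where "1 \<le> C" and strat: "\<forall>n. \<exists>\<sigma> :: 'a list \<Rightarrow> 'a set. winning_strategy p n C \<sigma>"
    using assms(2) unfolding asymptotic_lp_def by blast
  have "0 < p" using assms(1) by (rule order.strict_trans2[of 0 1 p, simplified])
  have bounds: "coeff_lp_norm p a / C \<le> N a \<and> N a \<le> C * coeff_lp_norm p a"
    if "1 \<le> l" "\<forall>i<l. F0 (x i)" "generates_jsm l x N" "fsupp l a"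
    for l and x :: "nat \<Rightarrow> nat \<Rightarrow> 'a" and N a
    using generates_jsm_lp_bounds[OF strat \<open>0 < p\<close> _ that(2-4)] that(1) by simp
  have "unif_unique_jsm_F0 TYPE('a)"
    unfolding unif_unique_jsm_F0_def
  proof (intro exI[of _ "C ^ 4"] conjI allI impI)
    show "0 < C ^ 4" using \<open>1 \<le> C\<close> by simp
    fix l and x y :: "nat \<Rightarrow> nat \<Rightarrow> 'a" and N\<^sub>1 N\<^sub>2
    assume "1 \<le> l" "\<forall>i<l. F0 (x i)" "\<forall>i<l. F0 (y i)" "generates_jsm l x N\<^sub>1" "generates_jsm l y N\<^sub>2"
    then show "jsm_equiv (C ^ 4) l N\<^sub>1 N\<^sub>2"
      using \<open>1 \<le> C\<close> bounds by (intro jsm_equiv_of_common_bounds[where L="coeff_lp_norm p"]) simp_all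
  qed
  moreover have "jsm_equiv_lp p l N"
    if "1 \<le> l" "\<forall>i<l. F0 (x i)" "generates_jsm l x N" for l and x :: "nat \<Rightarrow> nat \<Rightarrow> 'a" and N
    using \<open>1 \<le> C\<close> bounds[OF that] by (intro jsm_equiv_lp_of_bounds[of C]) simp_all
  ultimately show ?thesis by blast
qed

end
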